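(* Let $n\ge1$ and let $\phi,\psi$ be characters of $S_n$. Then $d_\phi^{S_n}(A)=d_\psi^{S_n}(A)$ for every $A\in\mathbb S_n(\mathbb C)$ if and only if $\phi=\psi$.
   Context: A character of a group $G\le S_n$ is a function $g\mapsto\operatorname{tr}(\rho(g))$ for some homomorphism $\rho:G\to GL_m(\mathbb C)$, $m\ge1$. $\mathbb S_n(\mathbb C)$ is the set of complex symmetric $n\times n$ matrices. For $\chi:S_n\to\mathbb C$, $d_\chi^{S_n}(A)=\sum_{\sigma\in S_n}\chi(\sigma)\prod_{i=1}^n A_{i\,\sigma(i)}$. *)

theory Defs
  imports "HOL-Combinatorics.Permutations" "Jordan_Normal_Form.Matrix"
begin

definition mat_trace :: "'a::comm_monoid_add mat \<Rightarrow> 'a" where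
  "mat_trace A = (\<Sum>i<dim_row A. A $$ (i, i))"

definition is_character :: "nat \<Rightarrow> ((nat \<Rightarrow> nat) \<Rightarrow> complex) \<Rightarrow> bool" where
  "is_character n \<chi> \<longleftrightarrow>
     (\<exists>m\<ge>1. \<exists>\<rho> :: (nat \<Rightarrow> nat) \<Rightarrow> complex mat.
        (\<forall>\<sigma>. \<sigma> permutes {..<n} \<longrightarrow> \<rho> \<sigma> \<in> carrier_mat m m \<and> invertible_mat (\<rho> \<sigma>)) \<and>
        (\<forall>\<sigma> \<tau>. \<sigma> permutes {..<n} \<longrightarrow> \<tau> permutes {..<n} \<longrightarrow> \<rho> (\<sigma> \<circ> \<tau>) = \<rho> \<sigma> * \<rho> \<tau>) \<and>
        (\<forall>\<sigma>. \<sigma> permutes {..<n} \<longrightarrow> \<chi> \<sigma> = mat_trace (\<rho> \<sigma>)))"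

definition gen_mat_fun :: "nat \<Rightarrow> ((nat \<Rightarrow> nat) \<Rightarrow> complex) \<Rightarrow> complex mat \<Rightarrow> complex" where
  "gen_mat_fun n \<chi> A = (\<Sum>\<sigma>\<in>{\<sigma>. \<sigma> permutes {..<n}}. \<chi> \<sigma> * (\<Prod>i<n. A $$ (i, \<sigma> i)))"

end

theory Submission
  imports Defs "HOL-Combinatorics.Cycles"
begin

text \<open>
  Evaluated at the symmetric 0/1 matrix with edge set E, the function d_\<chi> becomes the sum of
  \<chi> over all permutations whose undirected functional graph {{i, \<sigma> i}} lies inside E. If
  d_\<phi> = d_\<psi> on symmetric matrices, inclusion-exclusion over the edge sets therefore shows
  that \<phi> - \<psi> sums to zero over each class of permutations sharing the same undirected graph.
  Two such permutations differ only by reversing some of their cycles, hence are conjugate;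
  characters are class functions, so \<phi> - \<psi> is constant on each class and thus vanishes.
\<close>

lemma mat_trace_mult_comm:
  fixes A B :: "'a::comm_ring mat"
  assumes "A \<in> carrier_mat m m" "B \<in> carrier_mat m m"
  shows "mat_trace (A * B) = mat_trace (B * A)"
proof -
  have "mat_trace (A * B) = (\<Sum>i<m. \<Sum>k<m. A $$ (i,k) * B $$ (k,i))"
    using assms by (simp add: mat_trace_def scalar_prod_def atLeast0LessThan)
  also have "\<dots> = (\<Sum>k<m. \<Sum>i<m. B $$ (k,i) * A $$ (i,k))"
    by (subst sum.swap) (simp add: mult.commute)
  also have "\<dots> = mat_trace (B * A)"
    using assms by (simp add: mat_trace_def scalar_prod_def atLeast0LessThan)
  finally show ?thesis .
qed

lemma character_conj_invariant:
  assumes "is_character n \<chi>" "g permutes {..<n}" "\<sigma> permutes {..<n}"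
  shows "\<chi> (g \<circ> \<sigma> \<circ> Hilbert_Choice.inv g) = \<chi> \<sigma>"
proof -
  obtain m \<rho> where car: "\<And>\<sigma>. \<sigma> permutes {..<n} \<Longrightarrow> \<rho> \<sigma> \<in> carrier_mat m m"
    and hom: "\<And>\<sigma> \<tau>. \<sigma> permutes {..<n} \<Longrightarrow> \<tau> permutes {..<n} \<Longrightarrow> \<rho> (\<sigma> \<circ> \<tau>) = \<rho> \<sigma> * \<rho> \<tau>"
    and tr: "\<And>\<sigma>. \<sigma> permutes {..<n} \<Longrightarrow> \<chi> \<sigma> = mat_trace (\<rho> \<sigma>)"
    using assms(1) unfolding is_character_def by blast
  have h: "\<sigma> \<circ> Hilbert_Choice.inv g permutes {..<n}"
    using assms(2,3) by (simp add: permutes_compose permutes_inv)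
  have "\<chi> (g \<circ> \<sigma> \<circ> Hilbert_Choice.inv g) = mat_trace (\<rho> g * \<rho> (\<sigma> \<circ> Hilbert_Choice.inv g))"
    using tr[OF permutes_compose[OF h assms(2)]] hom[OF assms(2) h] by (simp add: o_assoc)
  also have "\<dots> = mat_trace (\<rho> (\<sigma> \<circ> Hilbert_Choice.inv g) * \<rho> g)"
    by (rule mat_trace_mult_comm[OF car[OF assms(2)] car[OF h]])
  also have "\<dots> = mat_trace (\<rho> \<sigma>)"
    using hom[OF h assms(2)] permutes_inv_o(2)[OF assms(2)] by (simp add: o_assoc[symmetric])
  finally show ?thesis using tr[OF assms(3)] by simp
qed

lemma funpow_period_pred_inverse:
  assumes "\<sigma> ^^ N = id" and "0 < N"
  shows "(\<sigma> ^^ (N - 1)) (\<sigma> x) = x" and "\<sigma> ((\<sigma> ^^ (N - 1)) x) = x"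
  using assms by (metis Suc_diff_1 funpow_simps_right(2) funpow.simps(2) id_apply o_apply)+

lemma funpow_left_inverse:
  fixes q \<sigma> :: "'a \<Rightarrow> 'a"
  assumes "\<And>x. q (\<sigma> x) = x"
  shows "(q ^^ j) ((\<sigma> ^^ j) x) = x"
  by (induction j arbitrary: x) (simp_all add: funpow_swap1[of \<sigma>] assms)

lemma funpow_left_inverse_cong:
  fixes q \<sigma> :: "'a \<Rightarrow> 'a"
  assumes "\<And>x. q (\<sigma> x) = x" and "(\<sigma> ^^ a) u = (\<sigma> ^^ b) u"
  shows "(q ^^ a) u = (q ^^ b) u"
proof -
  have "(q ^^ a) u = (q ^^ (a + b)) ((\<sigma> ^^ b) u)"
    by (simp add: funpow_add funpow_left_inverse assms(1))
  also have "\<dots> = (q ^^ (b + a)) ((\<sigma> ^^ a) u)"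
    using assms(2) by (simp add: add.commute)
  also have "\<dots> = (q ^^ b) u"
    by (simp add: funpow_add funpow_left_inverse assms(1))
  finally show ?thesis .
qed

lemma funpow_period_reaches_iff:
  assumes "\<sigma> ^^ N = id" and "0 < N"
  shows "(\<exists>k. (\<sigma> ^^ k) z = \<sigma> y) \<longleftrightarrow> (\<exists>k. (\<sigma> ^^ k) z = y)"
proof
  assume "\<exists>k. (\<sigma> ^^ k) z = \<sigma> y"
  then obtain k where "(\<sigma> ^^ k) z = \<sigma> y" by blast
  then have "(\<sigma> ^^ (N - 1 + k)) z = y"
    using funpow_period_pred_inverse(1)[OF assms] by (simp add: funpow_add)
  then show "\<exists>k. (\<sigma> ^^ k) z = y" by blast
next
  assume "\<exists>k. (\<sigma> ^^ k) z = y"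
  then obtain k where "(\<sigma> ^^ k) z = y" by blast
  then have "(\<sigma> ^^ Suc k) z = \<sigma> y" by simp
  then show "\<exists>k. (\<sigma> ^^ k) z = \<sigma> y" by blast
qed

lemma funpow_periodic_conj_inverse:
  fixes \<sigma> :: "'a::wellorder \<Rightarrow> 'a"
  assumes period: "\<sigma> ^^ N = id" and "0 < N"
  obtains g where "\<And>y. g (g y) = y" and "\<And>y. g (\<sigma> y) = (\<sigma> ^^ (N - 1)) (g y)"
    and "\<And>y. \<exists>k. g y = (\<sigma> ^^ k) y"
proof -
  define q where "q = \<sigma> ^^ (N - 1)"
  have q_\<sigma>: "q (\<sigma> x) = x" and \<sigma>_q: "\<sigma> (q x) = x" for x
    unfolding q_def using funpow_period_pred_inverse[OF assms] by blast+
  have q_pow: "q ^^ j = \<sigma> ^^ ((N - 1) * j)" for j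
    unfolding q_def by (simp add: funpow_mult)
  have q_period: "q ^^ N = id"
    by (metis q_pow funpow_mult id_funpow mult.commute period)
  \<comment> \<open>g reflects every orbit at its least element r y, writing y = \<sigma>^(D y) (r y).\<close>
  define r where "r y = (LEAST z. \<exists>k. (\<sigma> ^^ k) z = y)" for y
  define D where "D y = (LEAST k. (\<sigma> ^^ k) (r y) = y)" for y
  define g where "g y = (q ^^ D y) (r y)" for y
  have "\<exists>k. (\<sigma> ^^ k) (r y) = y" for y
    unfolding r_def by (rule LeastI_ex) (metis funpow_0)
  then have D: "(\<sigma> ^^ D y) (r y) = y" for y
    unfolding D_def by (rule LeastI_ex)
  have r_\<sigma>: "r (\<sigma> y) = r y" for y
    unfolding r_def funpow_period_reaches_iff[OF assms] ..
  have r_q_pow: "r ((q ^^ j) y) = r y" for j y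
    by (induction j) (simp_all add: r_\<sigma>[of "q _", unfolded \<sigma>_q, symmetric])
  have r_eq: "r y = (q ^^ D y) y" for y
    using funpow_left_inverse[of q \<sigma> "D y" "r y", OF q_\<sigma>] D[of y] by simp
  have g_eq: "g y = (q ^^ j) (r y)" if "(\<sigma> ^^ j) (r y) = y" for y j
    unfolding g_def using funpow_left_inverse_cong[of q \<sigma> "D y" "r y" j, OF q_\<sigma>] D[of y] that by simp
  have r_g: "r (g y) = r y" for y
    unfolding g_def by (metis r_q_pow r_eq)
  have "g (g y) = y" for y
  proof -
    have "(\<sigma> ^^ ((N - 1) * D y)) (r (g y)) = g y"
      unfolding r_g by (simp add: g_def q_pow)
    then have "g (g y) = (q ^^ ((N - 1) * D y)) ((q ^^ D y) y)"
      using g_eq r_g r_eq by metis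
    also have "\<dots> = (q ^^ ((N - 1) * D y + D y)) y"
      by (simp add: funpow_add)
    also have "(N - 1) * D y + D y = D y * N"
      using \<open>0 < N\<close> by (cases N) auto
    also have "q ^^ (D y * N) = (q ^^ N) ^^ D y"
      by (simp add: funpow_mult mult.commute)
    finally show ?thesis by (simp add: q_period)
  qed
  moreover have "g (\<sigma> y) = q (g y)" for y
  proof -
    have "(\<sigma> ^^ Suc (D y)) (r (\<sigma> y)) = \<sigma> y"
      using D[of y] r_\<sigma> by simp
    then have "g (\<sigma> y) = (q ^^ Suc (D y)) (r y)"
      using g_eq r_\<sigma> by metis
    then show ?thesis
      by (simp add: g_def)
  qed
  moreover have "g y = (\<sigma> ^^ ((N - 1) * (D y + D y))) y" for y
    unfolding q_pow[symmetric] by (simp add: g_def r_eq[of y] funpow_add)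
  ultimately show ?thesis
    using that unfolding q_def by blast
qed

lemma permutes_conj_if_inverse_on_invariant:
  fixes \<sigma> \<tau> :: "'a::wellorder \<Rightarrow> 'a"
  assumes \<sigma>: "\<sigma> permutes U" and "finite U"
    and \<sigma>_R: "\<And>y. y \<in> R \<Longrightarrow> \<sigma> y \<in> R"
    and \<tau>_R: "\<And>y. y \<in> R \<Longrightarrow> \<sigma> (\<tau> y) = y" and \<tau>_out: "\<And>y. y \<notin> R \<Longrightarrow> \<tau> y = \<sigma> y"
  shows "\<exists>g. g permutes U \<and> \<tau> = g \<circ> \<sigma> \<circ> Hilbert_Choice.inv g"
proof -
  have \<sigma>_pow_R: "(\<sigma> ^^ k) y \<in> R" if "y \<in> R" for k y
    using that by (induction k) (simp_all add: \<sigma>_R)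
  obtain N where period: "\<sigma> ^^ N = id" and "0 < N"
    using \<sigma> \<open>finite U\<close> permutation_is_nilpotent permutation_permutes by metis
  note \<sigma>_pred = funpow_period_pred_inverse(1)[OF period \<open>0 < N\<close>]
  have R_\<sigma>: "y \<in> R" if "\<sigma> y \<in> R" for y
    using \<sigma>_pow_R[OF that, of "N - 1"] by (simp only: \<sigma>_pred)
  obtain g0 where g0_inv: "\<And>y. g0 (g0 y) = y"
    and g0_conj: "\<And>y. g0 (\<sigma> y) = (\<sigma> ^^ (N - 1)) (g0 y)"
    and g0_orbit: "\<And>y. \<exists>k. g0 y = (\<sigma> ^^ k) y"
    using funpow_periodic_conj_inverse[OF period \<open>0 < N\<close>] by blast
  define g where "g y = (if y \<in> R then g0 y else y)" for y
  have g0_R: "g0 y \<in> R" if "y \<in> R" for y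
    using g0_orbit[of y] \<sigma>_pow_R[OF that] by force
  have g_inv: "g (g y) = y" for y
    using g0_inv g0_R unfolding g_def by auto
  have g_conj: "g (\<sigma> y) = \<tau> (g y)" for y
  proof (cases "y \<in> R")
    case True
    then show ?thesis
      using g0_conj[of y] \<sigma>_pred[of "\<tau> (g0 y)"] \<tau>_R[OF g0_R[OF True]] \<sigma>_R[OF True]
      by (simp add: g_def)
  next
    case False
    then show ?thesis
      using R_\<sigma> \<tau>_out unfolding g_def by auto
  qed
  have "g permutes U"
    unfolding permutes_def
  proof (intro conjI allI impI)
    show "g x = x" if "x \<notin> U" for x
      using g0_orbit[of x] permutes_not_in[OF permutes_funpow[OF \<sigma>] that] unfolding g_def by metis
    show "\<exists>!x. g x = y" for y
      using g_inv by metis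
  qed
  moreover have "Hilbert_Choice.inv g = g"
    by (rule inv_unique_comp) (simp_all add: fun_eq_iff g_inv)
  moreover have "\<tau> = g \<circ> \<sigma> \<circ> g"
  proof
    show "\<tau> x = (g \<circ> \<sigma> \<circ> g) x" for x
      using g_conj[of "g x"] g_inv[of x] by simp
  qed
  ultimately show ?thesis
    by auto
qed

definition perm_edges :: "'a set \<Rightarrow> ('a \<Rightarrow> 'a) \<Rightarrow> 'a set set" where
  "perm_edges U \<sigma> = (\<lambda>i. {i, \<sigma> i}) ` U"

lemma perm_edges_eq_imp_conj:
  fixes \<sigma> \<tau> :: "'a::wellorder \<Rightarrow> 'a"
  assumes \<sigma>: "\<sigma> permutes U" and \<tau>: "\<tau> permutes U" and "finite U"
    and edges: "perm_edges U \<sigma> = perm_edges U \<tau>"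
  shows "\<exists>g. g permutes U \<and> \<tau> = g \<circ> \<sigma> \<circ> Hilbert_Choice.inv g"
proof (rule permutes_conj_if_inverse_on_invariant[OF \<sigma> \<open>finite U\<close>])
  let ?R = "{y. \<tau> y \<noteq> \<sigma> y}"
  have edge_in: "{y, \<tau> y} \<in> perm_edges U \<sigma>" "{y, \<sigma> y} \<in> perm_edges U \<tau>" if "y \<in> U" for y
    using edges that unfolding perm_edges_def by blast+
  have R_sub: "?R \<subseteq> U"
    using permutes_not_in[OF \<sigma>] permutes_not_in[OF \<tau>] by fastforce
  show reverse: "\<sigma> (\<tau> y) = y" if y_R: "y \<in> ?R" for y
  proof -
    obtain i where "{i, \<sigma> i} = {y, \<tau> y}"
      using edge_in(1)[of y] y_R R_sub unfolding perm_edges_def by auto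
    then show ?thesis
      using y_R by (auto simp: doubleton_eq_iff)
  qed
  show "\<sigma> y \<in> ?R" if y_R: "y \<in> ?R" for y
  proof (intro CollectI notI)
    assume "\<tau> (\<sigma> y) = \<sigma> (\<sigma> y)"
    obtain i where "{i, \<tau> i} = {y, \<sigma> y}"
      using edge_in(2)[of y] y_R R_sub unfolding perm_edges_def by auto
    then have "\<tau> (\<sigma> y) = y"
      using y_R by (auto simp: doubleton_eq_iff)
    then have "\<sigma> (\<sigma> y) = \<sigma> (\<tau> y)"
      using reverse[OF y_R] \<open>\<tau> (\<sigma> y) = \<sigma> (\<sigma> y)\<close> by simp
    then show False
      using y_R permutes_inj[OF \<sigma>] by (simp add: inj_eq)
  qed
qed simp

lemma prod_of_bool:
  "finite A \<Longrightarrow> (\<Prod>x\<in>A. of_bool (P x) :: 'a::comm_semiring_1) = of_bool (\<forall>x\<in>A. P x)"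
  by (induction A rule: finite_induct) auto

definition adjacency_mat :: "nat \<Rightarrow> nat set set \<Rightarrow> 'a::zero_neq_one mat" where
  "adjacency_mat n E = mat n n (\<lambda>(i, j). of_bool ({i, j} \<in> E))"

lemma adjacency_mat_carrier: "adjacency_mat n E \<in> carrier_mat n n"
  by (simp add: adjacency_mat_def)

lemma transpose_adjacency_mat: "transpose_mat (adjacency_mat n E) = adjacency_mat n E"
  by (rule eq_matI) (auto simp: adjacency_mat_def insert_commute)

lemma gen_mat_fun_adjacency_mat:
  "gen_mat_fun n \<chi> (adjacency_mat n E) = sum \<chi> {\<sigma>. \<sigma> permutes {..<n} \<and> perm_edges {..<n} \<sigma> \<subseteq> E}"
proof -
  have "(\<Prod>i<n. (adjacency_mat n E :: complex mat) $$ (i, \<sigma> i)) = of_bool (perm_edges {..<n} \<sigma> \<subseteq> E)"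
    if "\<sigma> permutes {..<n}" for \<sigma>
  proof -
    have "(\<Prod>i<n. (adjacency_mat n E :: complex mat) $$ (i, \<sigma> i)) = (\<Prod>i<n. of_bool ({i, \<sigma> i} \<in> E))"
      using permutes_in_image[OF that] by (intro prod.cong) (auto simp: adjacency_mat_def)
    also have "\<dots> = of_bool (\<forall>i\<in>{..<n}. {i, \<sigma> i} \<in> E)"
      by (rule prod_of_bool) simp
    finally show ?thesis
      unfolding perm_edges_def by (simp add: image_subset_iff)
  qed
  then have "gen_mat_fun n \<chi> (adjacency_mat n E)
      = (\<Sum>\<sigma>\<in>{\<sigma>. \<sigma> permutes {..<n}}. \<chi> \<sigma> * of_bool (perm_edges {..<n} \<sigma> \<subseteq> E))"
    unfolding gen_mat_fun_def by (intro sum.cong) simp_all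
  also have "\<dots> = sum \<chi> {\<sigma>. \<sigma> permutes {..<n} \<and> perm_edges {..<n} \<sigma> \<subseteq> E}"
    by (simp add: finite_permutations Collect_conj_eq)
  finally show ?thesis .
qed

lemma sum_fibre_eq_zero_if_sum_downset_eq_zero:
  fixes c :: "'a \<Rightarrow> 'b::comm_monoid_add" and f :: "'a \<Rightarrow> 'c set"
  assumes "finite P" and downset: "\<And>E. finite E \<Longrightarrow> sum c {x\<in>P. f x \<subseteq> E} = 0" and "finite E"
  shows "sum c {x\<in>P. f x = E} = 0"
  using \<open>finite E\<close>
proof (induction "card E" arbitrary: E rule: less_induct)
  case less
  let ?below = "{x\<in>P. f x \<subset> E}"
  have "sum c ?below = (\<Sum>E'\<in>f ` ?below. sum c {x\<in>?below. f x = E'})"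
    using \<open>finite P\<close> by (intro sum.image_gen) simp
  also have "\<dots> = 0"
  proof (rule sum.neutral, rule ballI)
    fix E' assume "E' \<in> f ` ?below"
    then have "E' \<subset> E" by blast
    then have "sum c {x\<in>P. f x = E'} = 0"
      using less by (meson finite_subset psubset_card_mono psubset_imp_subset)
    then show "sum c {x\<in>?below. f x = E'} = 0"
      using \<open>E' \<subset> E\<close> by (simp add: conj_commute cong: conj_cong)
  qed
  finally have "sum c ?below = 0" .
  have "{x\<in>P. f x \<subseteq> E} = {x\<in>P. f x = E} \<union> ?below"
    by blast
  then have "sum c {x\<in>P. f x \<subseteq> E} = sum c {x\<in>P. f x = E} + sum c ?below"
    using \<open>finite P\<close> by (simp only:) (rule sum.union_disjoint; auto)
  with \<open>sum c ?below = 0\<close> have "sum c {x\<in>P. f x \<subseteq> E} = sum c {x\<in>P. f x = E}"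
    by simp
  then show ?case
    using downset[OF less.prems] by simp
qed

lemma class_fun_eq_zero_if_edge_downset_sums_zero:
  fixes c :: "('a::wellorder \<Rightarrow> 'a) \<Rightarrow> 'b::field_char_0"
  assumes "finite U"
    and conj: "\<And>g \<sigma>. g permutes U \<Longrightarrow> \<sigma> permutes U \<Longrightarrow> c (g \<circ> \<sigma> \<circ> Hilbert_Choice.inv g) = c \<sigma>"
    and downset: "\<And>E. finite E \<Longrightarrow> sum c {\<sigma>. \<sigma> permutes U \<and> perm_edges U \<sigma> \<subseteq> E} = 0"
    and \<sigma>: "\<sigma> permutes U"
  shows "c \<sigma> = 0"
proof -
  let ?P = "{\<sigma>. \<sigma> permutes U}"
  let ?T = "{\<tau>\<in>?P. perm_edges U \<tau> = perm_edges U \<sigma>}"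
  have fin: "finite ?P"
    using \<open>finite U\<close> by (rule finite_permutations)
  have "sum c ?T = 0"
    using sum_fibre_eq_zero_if_sum_downset_eq_zero[OF fin, of c "perm_edges U"] downset \<open>finite U\<close>
    by (simp add: perm_edges_def)
  moreover have "c \<tau> = c \<sigma>" if "\<tau> \<in> ?T" for \<tau>
  proof -
    from that have \<tau>: "\<tau> permutes U" and "perm_edges U \<sigma> = perm_edges U \<tau>"
      by auto
    then obtain g where "g permutes U" "\<tau> = g \<circ> \<sigma> \<circ> Hilbert_Choice.inv g"
      using perm_edges_eq_imp_conj[OF \<sigma> \<tau> \<open>finite U\<close>] by blast
    then show ?thesis
      using conj \<sigma> by simp
  qed
  then have "sum c ?T = of_nat (card ?T) * c \<sigma>"
    by simp
  moreover have "card ?T \<noteq> 0"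
    using fin \<sigma> by (auto simp: card_eq_0_iff)
  ultimately show ?thesis
    by simp
qed

theorem mainTheorem9:
  fixes n :: nat and \<phi> \<psi> :: "(nat \<Rightarrow> nat) \<Rightarrow> complex"
  assumes "n \<ge> 1" and "is_character n \<phi>" and "is_character n \<psi>"
  shows "(\<forall>A \<in> carrier_mat n n. transpose_mat A = A \<longrightarrow> gen_mat_fun n \<phi> A = gen_mat_fun n \<psi> A)
         \<longleftrightarrow> (\<forall>\<sigma>. \<sigma> permutes {..<n} \<longrightarrow> \<phi> \<sigma> = \<psi> \<sigma>)"
proof
  assume H: "\<forall>A \<in> carrier_mat n n. transpose_mat A = A \<longrightarrow> gen_mat_fun n \<phi> A = gen_mat_fun n \<psi> A"
  show "\<forall>\<sigma>. \<sigma> permutes {..<n} \<longrightarrow> \<phi> \<sigma> = \<psi> \<sigma>"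
  proof (intro allI impI)
    fix \<sigma> assume \<sigma>: "\<sigma> permutes {..<n}"
    have "(\<lambda>\<tau>. \<phi> \<tau> - \<psi> \<tau>) \<sigma> = 0"
    proof (rule class_fun_eq_zero_if_edge_downset_sums_zero[OF finite_lessThan _ _ \<sigma>])
      show "\<phi> (g \<circ> \<tau> \<circ> Hilbert_Choice.inv g) - \<psi> (g \<circ> \<tau> \<circ> Hilbert_Choice.inv g) = \<phi> \<tau> - \<psi> \<tau>"
        if "g permutes {..<n}" "\<tau> permutes {..<n}" for g \<tau>
        using character_conj_invariant[OF assms(2) that] character_conj_invariant[OF assms(3) that]
        by simp
      have "gen_mat_fun n \<phi> (adjacency_mat n E) = gen_mat_fun n \<psi> (adjacency_mat n E)" for E
        using H adjacency_mat_carrier transpose_adjacency_mat by blast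
      then show "(\<Sum>\<tau> | \<tau> permutes {..<n} \<and> perm_edges {..<n} \<tau> \<subseteq> E. \<phi> \<tau> - \<psi> \<tau>) = 0" for E
        by (simp add: gen_mat_fun_adjacency_mat sum_subtractf)
    qed
    then show "\<phi> \<sigma> = \<psi> \<sigma>"
      by simp
  qed
next
  assume "\<forall>\<sigma>. \<sigma> permutes {..<n} \<longrightarrow> \<phi> \<sigma> = \<psi> \<sigma>"
  then show "\<forall>A \<in> carrier_mat n n. transpose_mat A = A \<longrightarrow> gen_mat_fun n \<phi> A = gen_mat_fun n \<psi> A"
    unfolding gen_mat_fun_def by (auto intro!: sum.cong)
qed

end
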